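(* Let $\vec\Sigma$ be a finite sequence of finite connected tight labeled graphs over $\mathcal B$ and let $\alpha$ be an elementary Whitehead automorphism of $F(\mathcal B)$ with distinguished label $b$. For each edge $e$ of $\vec\Sigma$ whose label $c$ is not in $\{b,b^{-1}\}$, the path $\alpha(e)$ in $\alpha\vec\Sigma$ contains exactly one subedge labeled $c$; let $e'$ denote its image in $\mathrm{tight}(\alpha\vec\Sigma)$. Then $e\mapsto e'$ is a bijection from the edges of $\vec\Sigma$ not labeled $b^{\pm1}$ to the edges of $\mathrm{tight}(\alpha\vec\Sigma)$ not labeled $b^{\pm1}$. (More precisely, after collapsing all edges labeled $b^{\pm 1}$ in $\vec\Sigma$ and in $\mathrm{tight}(\alpha\vec\Sigma)$, the induced map between the collapsed graphs is an isomorphism.)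
   Context: $F(\mathcal B)$ is the free group on the finite set $\mathcal B$. A labeled graph assigns labels in $\mathcal B^{\pm1}$ to oriented edges, $e^{-1}$ carrying the inverse label; it is tight if distinct oriented edges with the same initial vertex have distinct labels. Folding identifies two distinct oriented edges with common initial vertex and the same label; $\mathrm{tight}(\Sigma)$ is the tight labeled graph obtained from a finite $\Sigma$ by iterated folding (it is well defined), with the quotient map $\Sigma\to\mathrm{tight}(\Sigma)$. For $\alpha\in\mathrm{Aut}(F(\mathcal B))$, $\alpha\Sigma$ is obtained by replacing each oriented edge labeled $c$ by a path spelling the reduced word $\alpha(c)$. Operations on sequences are applied componentwise. An elementary Whitehead automorphism is either an automorphism induced by a permutation $\pi$ of $\mathcal B^{\pm1}$ with $\pi(c^{-1})=\pi(c)^{-1}$, or is determined by $b\in\mathcal B^{\pm1}$ (the distinguished label) and $A\subset\mathcal B^{\pm1}\setminus\{b,b^{-1}\}$ via $\alpha(b)=b$ and $\alpha(c)=b^{\epsilon(c)}\,c\,b^{-\epsilon(c^{-1})}$ for $c\in\mathcal B^{\pm1}\setminus\{b^{\pm1}\}$, where $\epsilon(x)=1$ if $x\in A$ and $0$ otherwise. *)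

theory Defs
  imports Main
begin

text \<open>Signed letters: (x, True) stands for x, (x, False) for x^-1.\<close>

definition sinv :: "'b \<times> bool \<Rightarrow> 'b \<times> bool" where
  "sinv c = (fst c, \<not> snd c)"

definition signed :: "'b set \<Rightarrow> ('b \<times> bool) set" where
  "signed B = B \<times> UNIV"

text \<open>Labeled graphs in Serre's formalism: darts are oriented edges, dinv is the
  fixed-point-free involution reversing orientation, init the initial vertex,
  lab the label of an oriented edge.\<close>

record ('v, 'd, 'b) lgraph =
  verts :: "'v set"
  darts :: "'d set"
  dinv  :: "'d \<Rightarrow> 'd"
  init  :: "'d \<Rightarrow> 'v"
  lab   :: "'d \<Rightarrow> 'b \<times> bool"

definition term_v :: "('v, 'd, 'b) lgraph \<Rightarrow> 'd \<Rightarrow> 'v" where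
  "term_v G d = init G (dinv G d)"

definition labeled_graph :: "'b set \<Rightarrow> ('v, 'd, 'b) lgraph \<Rightarrow> bool" where
  "labeled_graph B G \<longleftrightarrow>
     (\<forall>d\<in>darts G. dinv G d \<in> darts G \<and> dinv G (dinv G d) = d \<and> dinv G d \<noteq> d
        \<and> init G d \<in> verts G \<and> lab G d \<in> signed B
        \<and> lab G (dinv G d) = sinv (lab G d))"

definition finite_graph :: "('v, 'd, 'b) lgraph \<Rightarrow> bool" where
  "finite_graph G \<longleftrightarrow> finite (verts G) \<and> finite (darts G)"

definition adj :: "('v, 'd, 'b) lgraph \<Rightarrow> 'v \<Rightarrow> 'v \<Rightarrow> bool" where
  "adj G u v \<longleftrightarrow> (\<exists>d\<in>darts G. init G d = u \<and> term_v G d = v)"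

definition connected_graph :: "('v, 'd, 'b) lgraph \<Rightarrow> bool" where
  "connected_graph G \<longleftrightarrow> (\<forall>u\<in>verts G. \<forall>v\<in>verts G. (adj G)\<^sup>*\<^sup>* u v)"

definition tight :: "('v, 'd, 'b) lgraph \<Rightarrow> bool" where
  "tight G \<longleftrightarrow> (\<forall>d1\<in>darts G. \<forall>d2\<in>darts G.
      d1 \<noteq> d2 \<and> init G d1 = init G d2 \<longrightarrow> lab G d1 \<noteq> lab G d2)"

text \<open>A single fold: H (with quotient maps f on vertices, g on darts) is obtained from G
  by identifying two distinct darts d1, d2 with common initial vertex and equal label
  (and hence their inverses and their terminal vertices).\<close>

definition is_fold :: "('v, 'd, 'b) lgraph \<Rightarrow> ('v, 'd, 'b) lgraph \<Rightarrow> ('v \<Rightarrow> 'v) \<Rightarrow> ('d \<Rightarrow> 'd) \<Rightarrow> bool" where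
  "is_fold G H f g \<longleftrightarrow>
     (\<exists>d1\<in>darts G. \<exists>d2\<in>darts G. d1 \<noteq> d2 \<and> init G d1 = init G d2 \<and> lab G d1 = lab G d2
       \<and> verts H = f ` verts G \<and> darts H = g ` darts G
       \<and> (\<forall>x\<in>darts G. dinv H (g x) = g (dinv G x) \<and> init H (g x) = f (init G x)
                         \<and> lab H (g x) = lab G x)
       \<and> (\<forall>x\<in>darts G. \<forall>y\<in>darts G. g x = g y \<longleftrightarrow>
             (x = y \<or> {x, y} = {d1, d2} \<or> {x, y} = {dinv G d1, dinv G d2}))
       \<and> (\<forall>u\<in>verts G. \<forall>v\<in>verts G. f u = f v \<longleftrightarrow>
             (u = v \<or> {u, v} = {term_v G d1, term_v G d2})))"

inductive folds_to :: "('v, 'd, 'b) lgraph \<Rightarrow> ('v, 'd, 'b) lgraph \<Rightarrow> ('v \<Rightarrow> 'v) \<Rightarrow> ('d \<Rightarrow> 'd) \<Rightarrow> bool" where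
  refl: "folds_to G G id id"
| step: "is_fold G G1 f1 g1 \<Longrightarrow> folds_to G1 H f2 g2 \<Longrightarrow> folds_to G H (f2 \<circ> f1) (g2 \<circ> g1)"

definition is_tightening :: "('v, 'd, 'b) lgraph \<Rightarrow> ('v, 'd, 'b) lgraph \<Rightarrow> ('v \<Rightarrow> 'v) \<Rightarrow> ('d \<Rightarrow> 'd) \<Rightarrow> bool" where
  "is_tightening G H f g \<longleftrightarrow> folds_to G H f g \<and> tight H"

text \<open>Elementary Whitehead automorphism with distinguished label b and set A:
  the reduced word alpha(c) for each signed letter c.\<close>

definition wh_word :: "'b \<times> bool \<Rightarrow> ('b \<times> bool) set \<Rightarrow> 'b \<times> bool \<Rightarrow> ('b \<times> bool) list" where
  "wh_word b A c =
     (if c = b \<or> c = sinv b then [c]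
      else (if c \<in> A then [b] else []) @ [c] @ (if sinv c \<in> A then [sinv b] else []))"

definition elementary_whitehead :: "'b set \<Rightarrow> 'b \<times> bool \<Rightarrow> ('b \<times> bool) set \<Rightarrow> bool" where
  "elementary_whitehead B b A \<longleftrightarrow> b \<in> signed B \<and> A \<subseteq> signed B - {b, sinv b}"

text \<open>alpha G: each oriented edge d labeled c is replaced by a path of darts (d,0),...,(d,n-1)
  spelling w c (n = length (w c)); the dart (d,i) is inverse to (dinv d, n-1-i).
  Old vertices are Inl v; the new interior vertex before (d,k) (0<k<n) is
  Inr {(d,k), (dinv d, n-k)}.\<close>

definition subdiv :: "('b \<times> bool \<Rightarrow> ('b \<times> bool) list) \<Rightarrow> ('v, 'd, 'b) lgraph
     \<Rightarrow> ('v + ('d \<times> nat) set, 'd \<times> nat, 'b) lgraph" where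
  "subdiv w G =
     \<lparr> verts = Inl ` verts G \<union>
         {Inr {(d, k), (dinv G d, length (w (lab G d)) - k)} | d k.
            d \<in> darts G \<and> 0 < k \<and> k < length (w (lab G d))},
       darts = {(d, i). d \<in> darts G \<and> i < length (w (lab G d))},
       dinv = (\<lambda>(d, i). (dinv G d, length (w (lab G d)) - 1 - i)),
       init = (\<lambda>(d, i). if i = 0 then Inl (init G d)
                        else Inr {(d, i), (dinv G d, length (w (lab G d)) - i)}),
       lab = (\<lambda>(d, i). w (lab G d) ! i) \<rparr>"

definition sub_idx :: "'b \<times> bool \<Rightarrow> ('b \<times> bool) set \<Rightarrow> 'b \<times> bool \<Rightarrow> nat" where
  "sub_idx b A c = (THE i. i < length (wh_word b A c) \<and> wh_word b A c ! i = c)"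

text \<open>Collapsing the edges labeled b^{+-1}: equivalence relation on vertices.\<close>

definition bstep :: "('v, 'd, 'b) lgraph \<Rightarrow> 'b \<times> bool \<Rightarrow> 'v \<Rightarrow> 'v \<Rightarrow> bool" where
  "bstep G b u v \<longleftrightarrow> (\<exists>d\<in>darts G. lab G d \<in> {b, sinv b} \<and> init G d = u \<and> term_v G d = v)"

definition bcomp :: "('v, 'd, 'b) lgraph \<Rightarrow> 'b \<times> bool \<Rightarrow> ('v \<times> 'v) set" where
  "bcomp G b = {(u, v). u \<in> verts G \<and> v \<in> verts G \<and> (bstep G b)\<^sup>*\<^sup>* u v}"

definition nonb_darts :: "('v, 'd, 'b) lgraph \<Rightarrow> 'b \<times> bool \<Rightarrow> 'd set" where
  "nonb_darts G b = {d \<in> darts G. lab G d \<notin> {b, sinv b}}"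

end

theory Submission
  imports Defs
begin

text \<open>Send each vertex of \<alpha>S to the vertex at which it ends up after folding: old
  vertices stay, and the vertex following the prefix b of the path replacing an edge e goes to
  the end of the edge labeled b at the initial vertex of e (a new vertex if there is none).
  Since S is tight, this labelling \<rho> is deterministic (equally labeled edges starting at
  vertices with the same label end at vertices with the same label), and an edge of \<alpha>S not
  labeled b^{+-1} is determined by its label and the label of its initial vertex. A fold only
  identifies vertices that every deterministic labelling identifies, so tight(\<alpha>S) identifies
  no two of the subedges labeled c, and these are all the edges of \<alpha>S not labeled b^{+-1}. For vertices, each
  subdivision vertex is joined to an old vertex by an edge labeled b, and along edges labeled
  b^{+-1} the label \<rho> stays within one b-component of S; hence the b-components of S and of
  tight(\<alpha>S) correspond.\<close>

lemma sinv_sinv [simp]: "sinv (sinv c) = c"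
  by (simp add: sinv_def)

lemma sinv_neq [simp]: "sinv c \<noteq> c" "c \<noteq> sinv c"
  by (cases c; simp add: sinv_def)+

lemma sinv_eq_iff: "sinv c = d \<longleftrightarrow> c = sinv d"
  by (metis sinv_sinv)

lemma labeled_graphD:
  assumes "labeled_graph B G" "x \<in> darts G"
  shows dinv_dart: "dinv G x \<in> darts G"
    and dinv_dinv: "dinv G (dinv G x) = x"
    and dinv_neq: "dinv G x \<noteq> x"
    and init_vert: "init G x \<in> verts G"
    and term_vert: "term_v G x \<in> verts G"
    and lab_signed: "lab G x \<in> signed B"
    and lab_dinv: "lab G (dinv G x) = sinv (lab G x)"
    and init_dinv: "init G (dinv G x) = term_v G x"
    and term_dinv: "term_v G (dinv G x) = init G x"
  using assms unfolding labeled_graph_def term_v_def by auto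

definition graph_quotient ::
    "('v1, 'd1, 'b) lgraph \<Rightarrow> ('v2, 'd2, 'b) lgraph \<Rightarrow> ('v1 \<Rightarrow> 'v2) \<Rightarrow> ('d1 \<Rightarrow> 'd2) \<Rightarrow> bool" where
  "graph_quotient G H f g \<longleftrightarrow> verts H = f ` verts G \<and> darts H = g ` darts G
     \<and> (\<forall>x\<in>darts G. dinv H (g x) = g (dinv G x) \<and> init H (g x) = f (init G x) \<and> lab H (g x) = lab G x)"

definition label_deterministic :: "('v, 'd, 'b) lgraph \<Rightarrow> ('v \<Rightarrow> 'r) \<Rightarrow> bool" where
  "label_deterministic G \<sigma> \<longleftrightarrow> (\<forall>x\<in>darts G. \<forall>y\<in>darts G.
      lab G x = lab G y \<and> \<sigma> (init G x) = \<sigma> (init G y) \<longrightarrow> \<sigma> (term_v G x) = \<sigma> (term_v G y))"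

lemma label_deterministicD:
  assumes "label_deterministic G \<sigma>" "x \<in> darts G" "y \<in> darts G" "lab G x = lab G y"
    "\<sigma> (init G x) = \<sigma> (init G y)"
  shows "\<sigma> (term_v G x) = \<sigma> (term_v G y)"
  using assms unfolding label_deterministic_def by blast

lemma graph_quotientD:
  assumes "graph_quotient G H f g" "x \<in> darts G"
  shows "g x \<in> darts H" "dinv H (g x) = g (dinv G x)" "init H (g x) = f (init G x)"
    "lab H (g x) = lab G x"
  using assms unfolding graph_quotient_def by auto

lemma graph_quotient_term_v:
  assumes "graph_quotient G H f g" "labeled_graph B G" "x \<in> darts G"
  shows "term_v H (g x) = f (term_v G x)"
  using assms dinv_dart[OF assms(2,3)] unfolding graph_quotient_def term_v_def by auto

lemma graph_quotient_labeled_graph: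
  assumes Q: "graph_quotient G H f g" and L: "labeled_graph B G"
  shows "labeled_graph B H"
  unfolding labeled_graph_def
proof
  fix y assume "y \<in> darts H"
  then obtain x where x: "x \<in> darts G" "y = g x" using Q unfolding graph_quotient_def by auto
  have lab: "lab H (dinv H y) = sinv (lab H y)"
    using graph_quotientD(2,4)[OF Q] x lab_dinv[OF L x(1)] dinv_dart[OF L x(1)] by simp
  then have "dinv H y \<noteq> y" by (metis sinv_neq(1))
  moreover have "dinv H y \<in> darts H" "dinv H (dinv H y) = y" "init H y \<in> verts H" "lab H y \<in> signed B"
    using graph_quotientD[OF Q x(1)] graph_quotientD[OF Q dinv_dart[OF L x(1)]] x(2) Q
      dinv_dinv[OF L x(1)] init_vert[OF L x(1)] lab_signed[OF L x(1)]
    unfolding graph_quotient_def by auto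
  ultimately show "dinv H y \<in> darts H \<and> dinv H (dinv H y) = y \<and> dinv H y \<noteq> y \<and> init H y \<in> verts H
        \<and> lab H y \<in> signed B \<and> lab H (dinv H y) = sinv (lab H y)"
    using lab by blast
qed

lemma graph_quotient_id: "graph_quotient G G id id"
  unfolding graph_quotient_def by simp

lemma graph_quotient_comp:
  assumes "graph_quotient G G1 f1 g1" "graph_quotient G1 H f2 g2"
  shows "graph_quotient G H (f2 \<circ> f1) (g2 \<circ> g1)"
  using assms unfolding graph_quotient_def by (simp add: image_comp)

lemma is_fold_graph_quotient: "is_fold G H f g \<Longrightarrow> graph_quotient G H f g"
  unfolding is_fold_def graph_quotient_def by (elim bexE conjE) (intro conjI; assumption)

lemma folds_to_graph_quotient: "folds_to G H f g \<Longrightarrow> graph_quotient G H f g"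
proof (induction rule: folds_to.induct)
  case (refl G)
  show ?case by (rule graph_quotient_id)
next
  case (step G G1 f1 g1 H f2 g2)
  show ?case by (rule graph_quotient_comp[OF is_fold_graph_quotient[OF step.hyps(1)] step.IH])
qed

lemma is_fold_respects_deterministic:
  assumes F: "is_fold G H f g" and D: "label_deterministic G \<sigma>"
    and uv: "u \<in> verts G" "v \<in> verts G" "f u = f v"
  shows "\<sigma> u = \<sigma> v"
proof -
  obtain d1 d2 where d: "d1 \<in> darts G" "d2 \<in> darts G" "init G d1 = init G d2" "lab G d1 = lab G d2"
    and fv: "\<forall>u\<in>verts G. \<forall>v\<in>verts G. f u = f v \<longleftrightarrow> (u = v \<or> {u, v} = {term_v G d1, term_v G d2})"
    using F unfolding is_fold_def by (elim bexE conjE) (rule that)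
  have "\<sigma> (term_v G d1) = \<sigma> (term_v G d2)"
    using label_deterministicD[OF D d(1,2,4)] d(3) by simp
  moreover have "u = v \<or> {u, v} = {term_v G d1, term_v G d2}" using fv uv by blast
  ultimately show ?thesis by (auto simp: doubleton_eq_iff)
qed

lemma graph_quotient_label_deterministic:
  assumes Q: "graph_quotient G H f g" and L: "labeled_graph B G" and D: "label_deterministic G \<sigma>"
    and \<tau>: "\<And>u. u \<in> verts G \<Longrightarrow> \<tau> (f u) = \<sigma> u"
  shows "label_deterministic H \<tau>"
  unfolding label_deterministic_def
proof (intro ballI impI)
  fix x' y' assume "x' \<in> darts H" "y' \<in> darts H"
    and xy: "lab H x' = lab H y' \<and> \<tau> (init H x') = \<tau> (init H y')"
  then obtain x y where x: "x \<in> darts G" "x' = g x" and y: "y \<in> darts G" "y' = g y"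
    using Q unfolding graph_quotient_def by auto
  have "lab G x = lab G y \<and> \<sigma> (init G x) = \<sigma> (init G y)"
    using xy x y graph_quotientD(3,4)[OF Q] \<tau>[OF init_vert[OF L]] by simp
  then have "\<sigma> (term_v G x) = \<sigma> (term_v G y)"
    using label_deterministicD[OF D x(1) y(1)] by blast
  then show "\<tau> (term_v H x') = \<tau> (term_v H y')"
    using x y graph_quotient_term_v[OF Q L] \<tau>[OF term_vert[OF L]] by simp
qed

lemma folds_to_respects_deterministic:
  assumes "folds_to G H f g" "labeled_graph B G" "label_deterministic G \<sigma>"
    "u \<in> verts G" "v \<in> verts G" "f u = f v"
  shows "\<sigma> u = \<sigma> v"
  using assms
proof (induction arbitrary: \<sigma> u v rule: folds_to.induct)
  case (refl G)
  then show ?case by simp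
next
  case (step G G1 f1 g1 H f2 g2)
  have Q: "graph_quotient G G1 f1 g1" using step.hyps(1) by (rule is_fold_graph_quotient)
  define \<tau> where "\<tau> = \<sigma> \<circ> inv_into (verts G) f1"
  have \<tau>: "\<tau> (f1 u) = \<sigma> u" if "u \<in> verts G" for u
    unfolding \<tau>_def using that
    by (auto intro!: is_fold_respects_deterministic[OF step.hyps(1) step.prems(2)]
        inv_into_into f_inv_into_f[of "f1 u" f1 "verts G"])
  have "labeled_graph B G1" using graph_quotient_labeled_graph[OF Q step.prems(1)] .
  moreover have "label_deterministic G1 \<tau>"
    using graph_quotient_label_deterministic[OF Q step.prems(1,2)] \<tau> by blast
  moreover have "f1 u \<in> verts G1" "f1 v \<in> verts G1"
    using Q step.prems(3,4) unfolding graph_quotient_def by auto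
  ultimately have "\<tau> (f1 u) = \<tau> (f1 v)" using step.IH step.prems(5) by simp
  then show ?case using \<tau> step.prems(3,4) by simp
qed

lemma wh_word_b [simp]: "wh_word b A b = [b]" "wh_word b A (sinv b) = [sinv b]"
  by (simp_all add: wh_word_def)

lemma wh_word_nonb:
  "c \<noteq> b \<Longrightarrow> c \<noteq> sinv b \<Longrightarrow>
     wh_word b A c = (if c \<in> A then [b] else []) @ [c] @ (if sinv c \<in> A then [sinv b] else [])"
  by (simp add: wh_word_def)

lemma wh_word_sinv: "wh_word b A (sinv c) = map sinv (rev (wh_word b A c))"
proof (cases "c = b \<or> c = sinv b")
  case True
  then show ?thesis by (auto simp: wh_word_def)
next
  case False
  then have "sinv c \<noteq> b" "sinv c \<noteq> sinv b" by (auto simp: sinv_eq_iff)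
  then show ?thesis using False by (simp add: wh_word_nonb)
qed

lemma length_wh_word_sinv [simp]: "length (wh_word b A (sinv c)) = length (wh_word b A c)"
  by (simp add: wh_word_sinv)

lemma length_wh_word_nonb:
  "c \<noteq> b \<Longrightarrow> c \<noteq> sinv b \<Longrightarrow>
     length (wh_word b A c) = (if c \<in> A then 1 else 0) + 1 + (if sinv c \<in> A then 1 else 0)"
  by (simp add: wh_word_nonb)

lemma set_wh_word:
  "elementary_whitehead B b A \<Longrightarrow> c \<in> signed B \<Longrightarrow> set (wh_word b A c) \<subseteq> signed B"
  unfolding elementary_whitehead_def wh_word_def signed_def sinv_def by auto

lemma wh_word_nth_eq_self_iff:
  assumes "c \<noteq> b" "c \<noteq> sinv b"
  shows "i < length (wh_word b A c) \<and> wh_word b A c ! i = c \<longleftrightarrow> i = (if c \<in> A then 1 else 0)"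
  using assms
  by (cases "c \<in> A"; cases "sinv c \<in> A"; cases i; cases "i - 1"; auto simp add: wh_word_nonb)

lemma nonb_dart_unique_self_index:
  "d \<in> nonb_darts G b \<Longrightarrow> \<exists>!i. i < length (wh_word b A (lab G d)) \<and> wh_word b A (lab G d) ! i = lab G d"
  unfolding nonb_darts_def by (simp add: wh_word_nth_eq_self_iff)

lemma sub_idx_nonb:
  "c \<noteq> b \<Longrightarrow> c \<noteq> sinv b \<Longrightarrow> sub_idx b A c = (if c \<in> A then 1 else 0)"
  unfolding sub_idx_def using wh_word_nth_eq_self_iff by blast

lemma wh_word_nth_nonb:
  assumes "c \<noteq> b" "c \<noteq> sinv b" "i < length (wh_word b A c)" "wh_word b A c ! i \<notin> {b, sinv b}"
  shows "wh_word b A c ! i = c" "i = sub_idx b A c"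
  using assms
  by (cases "c \<in> A"; cases "sinv c \<in> A"; cases i; cases "i - 1"; simp add: wh_word_nonb sub_idx_nonb)+

lemma wh_word_nth_eq_b:
  assumes "c \<noteq> b" "c \<noteq> sinv b" "i < length (wh_word b A c)" "wh_word b A c ! i = b"
  shows "c \<in> A" "i = 0"
  using assms
  by (cases "c \<in> A"; cases "sinv c \<in> A"; cases i; cases "i - 1"; simp add: wh_word_nonb)+

lemma
  shows verts_subdiv: "verts (subdiv w G) = Inl ` verts G \<union>
         {Inr {(d, k), (dinv G d, length (w (lab G d)) - k)} | d k.
            d \<in> darts G \<and> 0 < k \<and> k < length (w (lab G d))}"
    and darts_subdiv: "darts (subdiv w G) = {(d, i). d \<in> darts G \<and> i < length (w (lab G d))}"
    and dinv_subdiv: "dinv (subdiv w G) (d, i) = (dinv G d, length (w (lab G d)) - 1 - i)"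
    and init_subdiv: "init (subdiv w G) (d, i) =
       (if i = 0 then Inl (init G d) else Inr {(d, i), (dinv G d, length (w (lab G d)) - i)})"
    and lab_subdiv: "lab (subdiv w G) (d, i) = w (lab G d) ! i"
  by (simp_all add: subdiv_def)

lemma term_v_subdiv:
  "term_v (subdiv w G) (d, i) = init (subdiv w G) (dinv G d, length (w (lab G d)) - 1 - i)"
  by (simp add: term_v_def dinv_subdiv)

lemma labeled_graph_subdiv:
  assumes L: "labeled_graph B G"
    and w_sinv: "\<And>c. w (sinv c) = map sinv (rev (w c))"
    and w_signed: "\<And>c. c \<in> signed B \<Longrightarrow> set (w c) \<subseteq> signed B"
  shows "labeled_graph B (subdiv w G)"
  unfolding labeled_graph_def
proof
  fix x assume "x \<in> darts (subdiv w G)"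
  then obtain d i where x: "x = (d, i)" "d \<in> darts G" "i < length (w (lab G d))"
    by (auto simp: darts_subdiv)
  define n where "n = length (w (lab G d))"
  have n_dinv: "length (w (lab G (dinv G d))) = n"
    unfolding n_def lab_dinv[OF L x(2)] w_sinv by simp
  have i: "i < n" using x(3) unfolding n_def .
  have "w (lab G d) ! i \<in> signed B"
    using w_signed[OF lab_signed[OF L x(2)]] nth_mem[OF x(3)] by blast
  moreover have "w (lab G (dinv G d)) ! (n - 1 - i) = sinv (w (lab G d) ! i)"
    using i unfolding lab_dinv[OF L x(2)] w_sinv n_def by (simp add: rev_nth)
  moreover have "init (subdiv w G) (d, i) \<in> verts (subdiv w G)"
    using i x(2) init_vert[OF L x(2)] unfolding init_subdiv verts_subdiv n_def by auto
  ultimately show "dinv (subdiv w G) x \<in> darts (subdiv w G) \<and> dinv (subdiv w G) (dinv (subdiv w G) x) = x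
      \<and> dinv (subdiv w G) x \<noteq> x \<and> init (subdiv w G) x \<in> verts (subdiv w G)
      \<and> lab (subdiv w G) x \<in> signed B \<and> lab (subdiv w G) (dinv (subdiv w G) x) = sinv (lab (subdiv w G) x)"
    using x i dinv_dart[OF L x(2)] dinv_dinv[OF L x(2)] dinv_neq[OF L x(2)] n_dinv
    unfolding n_def by (simp add: darts_subdiv dinv_subdiv lab_subdiv)
qed

lemma init_subdiv_dinv:
  assumes L: "labeled_graph B G" and w_len: "\<And>c. length (w (sinv c)) = length (w c)"
    and d: "d \<in> darts G" and i: "0 < i" "i < length (w (lab G d))"
  shows "init (subdiv w G) (dinv G d, length (w (lab G d)) - i) = init (subdiv w G) (d, i)"
  using i labeled_graphD[OF L d] w_len[of "lab G d"] by (auto simp: init_subdiv)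

lemma quotient_classes_image:
  assumes R: "equiv X R" and R': "equiv Y R'"
    and h_iff: "\<And>x x'. x \<in> X \<Longrightarrow> x' \<in> X \<Longrightarrow> (h x, h x') \<in> R' \<longleftrightarrow> (x, x') \<in> R"
    and x: "x \<in> X"
  shows "(\<Union>x'\<in>R `` {x}. R' `` {h x'}) = R' `` {h x}"
proof -
  have "R' `` {h x'} = R' `` {h x}" if "x' \<in> R `` {x}" for x'
  proof -
    have "(x, x') \<in> R" "x' \<in> X" using that R unfolding equiv_def refl_on_def by auto
    then have "(h x, h x') \<in> R'" using h_iff[OF x] by blast
    then show ?thesis by (rule sym[OF equiv_class_eq[OF R']])
  qed
  then show ?thesis using equiv_class_self[OF R x] by blast
qed

lemma bij_betw_quotient_classes:
  assumes R: "equiv X R" and R': "equiv Y R'" and h: "h ` X \<subseteq> Y"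
    and h_iff: "\<And>x x'. x \<in> X \<Longrightarrow> x' \<in> X \<Longrightarrow> (h x, h x') \<in> R' \<longleftrightarrow> (x, x') \<in> R"
    and h_onto: "\<And>y. y \<in> Y \<Longrightarrow> \<exists>x\<in>X. (h x, y) \<in> R'"
  shows "bij_betw (\<lambda>C. \<Union>x\<in>C. R' `` {h x}) (X // R) (Y // R')"
proof -
  note image = quotient_classes_image[OF R R' h_iff]
  have "inj_on (\<lambda>C. \<Union>x\<in>C. R' `` {h x}) (X // R)"
  proof (rule inj_onI)
    fix C D assume "C \<in> X // R" "D \<in> X // R"
      and CD: "(\<Union>x\<in>C. R' `` {h x}) = (\<Union>x\<in>D. R' `` {h x})"
    then obtain x x' where x: "x \<in> X" "C = R `` {x}" and x': "x' \<in> X" "D = R `` {x'}"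
      by (auto elim!: quotientE)
    have "R' `` {h x} = R' `` {h x'}" using CD image x x' by simp
    moreover have "h x \<in> Y" "h x' \<in> Y" using h x(1) x'(1) by auto
    ultimately have "(h x, h x') \<in> R'" by (simp add: eq_equiv_class_iff[OF R'])
    then show "C = D" using h_iff[OF x(1) x'(1)] R x x' by (simp add: equiv_class_eq_iff)
  qed
  moreover have "(\<lambda>C. \<Union>x\<in>C. R' `` {h x}) ` (X // R) = Y // R'"
  proof
    show "(\<lambda>C. \<Union>x\<in>C. R' `` {h x}) ` (X // R) \<subseteq> Y // R'"
      using image h by (auto elim!: quotientE intro!: quotientI)
    show "Y // R' \<subseteq> (\<lambda>C. \<Union>x\<in>C. R' `` {h x}) ` (X // R)"
    proof
      fix E assume "E \<in> Y // R'"
      then obtain y where y: "y \<in> Y" "E = R' `` {y}" by (auto elim!: quotientE)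
      then obtain x where x: "x \<in> X" "(h x, y) \<in> R'" using h_onto by blast
      then have "E = (\<Union>x'\<in>R `` {x}. R' `` {h x'})" using y image R' by (simp add: equiv_class_eq_iff)
      then show "E \<in> (\<lambda>C. \<Union>x\<in>C. R' `` {h x}) ` (X // R)" using x(1) by (auto intro: quotientI)
    qed
  qed
  ultimately show ?thesis unfolding bij_betw_def by blast
qed

lemma bstep_sym:
  assumes L: "labeled_graph B G" and "bstep G b u v"
  shows "bstep G b v u"
proof -
  obtain d where d: "d \<in> darts G" "lab G d \<in> {b, sinv b}" "init G d = u" "term_v G d = v"
    using assms(2) unfolding bstep_def by blast
  have "lab G (dinv G d) \<in> {b, sinv b}" using d(2) lab_dinv[OF L d(1)] by auto
  then show ?thesis
    unfolding bstep_def using dinv_dart[OF L d(1)] init_dinv[OF L d(1)] term_dinv[OF L d(1)] d(3,4) by blast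
qed

lemma equiv_bcomp:
  assumes "labeled_graph B G"
  shows "equiv (verts G) (bcomp G b)"
proof -
  have "symp (bstep G b)" by (rule sympI) (rule bstep_sym[OF assms])
  then show ?thesis
    unfolding equiv_def refl_on_def sym_def trans_def bcomp_def
    using sympD[OF symp_rtranclp] by (auto intro: rtranclp_trans)
qed

lemma bcomp_bstep:
  assumes "bstep G b u v" "u \<in> verts G" "v \<in> verts G"
  shows "(u, v) \<in> bcomp G b"
  using assms unfolding bcomp_def by auto

lemma graph_quotient_bstep:
  assumes Q: "graph_quotient G H f g" and L: "labeled_graph B G" and "bstep G b u v"
  shows "bstep H b (f u) (f v)"
proof -
  obtain x where x: "x \<in> darts G" "lab G x \<in> {b, sinv b}" "init G x = u" "term_v G x = v"
    using assms(3) unfolding bstep_def by blast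
  show ?thesis
    unfolding bstep_def
    using graph_quotientD[OF Q x(1)] graph_quotient_term_v[OF Q L x(1)] x by (intro bexI[of _ "g x"]) auto
qed

lemma graph_quotient_bcomp:
  assumes Q: "graph_quotient G H f g" and L: "labeled_graph B G" and uv: "(u, v) \<in> bcomp G b"
  shows "(f u, f v) \<in> bcomp H b"
proof -
  from uv have "(bstep G b)\<^sup>*\<^sup>* u v" unfolding bcomp_def by simp
  then have "(bstep H b)\<^sup>*\<^sup>* (f u) (f v)"
    by (induction rule: rtranclp_induct) (auto intro: rtranclp.rtrancl_into_rtrancl graph_quotient_bstep[OF Q L])
  moreover have "f u \<in> verts H" "f v \<in> verts H"
    using uv Q unfolding bcomp_def graph_quotient_def by auto
  ultimately show ?thesis unfolding bcomp_def by simp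
qed

lemma graph_quotient_bcomp_invariant:
  assumes Q: "graph_quotient G H f g" and L: "labeled_graph B G"
    and \<kappa>_dart: "\<And>x. x \<in> darts G \<Longrightarrow> lab G x \<in> {b, sinv b} \<Longrightarrow> \<kappa> (init G x) = \<kappa> (term_v G x)"
    and \<kappa>_fibre: "\<And>u v. u \<in> verts G \<Longrightarrow> v \<in> verts G \<Longrightarrow> f u = f v \<Longrightarrow> \<kappa> u = \<kappa> v"
    and uv: "(f u, f v) \<in> bcomp H b" "u \<in> verts G" "v \<in> verts G"
  shows "\<kappa> u = \<kappa> v"
proof -
  have "\<exists>v'\<in>verts G. f v' = q \<and> \<kappa> v' = \<kappa> u" if "(bstep H b)\<^sup>*\<^sup>* (f u) q" for q
    using that
  proof (induction rule: rtranclp_induct)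
    case base
    then show ?case using uv(2) by blast
  next
    case (step q r)
    then obtain v' where v': "v' \<in> verts G" "f v' = q" "\<kappa> v' = \<kappa> u" by blast
    obtain y where y: "y \<in> darts H" "lab H y \<in> {b, sinv b}" "init H y = q" "term_v H y = r"
      using step.hyps(2) unfolding bstep_def by blast
    obtain x where x: "x \<in> darts G" "y = g x" using y(1) Q unfolding graph_quotient_def by auto
    have "\<kappa> (init G x) = \<kappa> v'"
      using \<kappa>_fibre[OF init_vert[OF L x(1)] v'(1)] graph_quotientD(3)[OF Q x(1)] x(2) y(3) v'(2)
      by simp
    moreover have "\<kappa> (init G x) = \<kappa> (term_v G x)"
      using \<kappa>_dart[OF x(1)] graph_quotientD(4)[OF Q x(1)] x(2) y(2) by simp
    moreover have "f (term_v G x) = r" using graph_quotient_term_v[OF Q L x(1)] x(2) y(4) by simp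
    ultimately show ?case using term_vert[OF L x(1)] v'(3) by metis
  qed
  moreover have "(bstep H b)\<^sup>*\<^sup>* (f u) (f v)" using uv(1) unfolding bcomp_def by simp
  ultimately obtain v' where "v' \<in> verts G" "f v' = f v" "\<kappa> v' = \<kappa> u" by blast
  then show ?thesis using \<kappa>_fibre[OF _ uv(3)] by metis
qed

locale whitehead_subdivision =
  fixes B :: "'b set" and b :: "'b \<times> bool" and A :: "('b \<times> bool) set"
    and S :: "('v, 'd, 'b) lgraph"
  assumes labeled_S: "labeled_graph B S" and whitehead: "elementary_whitehead B b A"
begin

abbreviation \<alpha>S :: "('v + ('d \<times> nat) set, 'd \<times> nat, 'b) lgraph" where
  "\<alpha>S \<equiv> subdiv (wh_word b A) S"

lemma A_nonb: "c \<in> A \<Longrightarrow> c \<noteq> b \<and> c \<noteq> sinv b"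
  using whitehead unfolding elementary_whitehead_def by auto

lemma labeled_\<alpha>S: "labeled_graph B \<alpha>S"
  using labeled_graph_subdiv[where w = "wh_word b A", OF labeled_S wh_word_sinv set_wh_word[OF whitehead]] .

lemma b_dart_subdiv:
  assumes d: "d \<in> darts S" "lab S d \<in> {b, sinv b}"
  shows "(d, 0) \<in> darts \<alpha>S" "lab \<alpha>S (d, 0) = lab S d" "init \<alpha>S (d, 0) = Inl (init S d)"
    "term_v \<alpha>S (d, 0) = Inl (term_v S d)"
proof -
  have w: "wh_word b A (lab S d) = [lab S d]" using d(2) by auto
  then have "length (wh_word b A (lab S (dinv S d))) = 1"
    using lab_dinv[OF labeled_S d(1)] by simp
  then show "(d, 0) \<in> darts \<alpha>S" "lab \<alpha>S (d, 0) = lab S d" "init \<alpha>S (d, 0) = Inl (init S d)"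
    "term_v \<alpha>S (d, 0) = Inl (term_v S d)"
    using d(1) w init_dinv[OF labeled_S d(1)]
    by (simp_all add: darts_subdiv lab_subdiv init_subdiv term_v_subdiv)
qed

lemma prefix_dart_subdiv:
  assumes d: "d \<in> darts S" "lab S d \<in> A"
  shows "(d, 0) \<in> darts \<alpha>S" "lab \<alpha>S (d, 0) = b" "init \<alpha>S (d, 0) = Inl (init S d)"
    "term_v \<alpha>S (d, 0) = init \<alpha>S (d, 1)"
proof -
  let ?n = "length (wh_word b A (lab S d))"
  have nb: "lab S d \<noteq> b" "lab S d \<noteq> sinv b" using A_nonb d(2) by auto
  have n: "2 \<le> ?n" using length_wh_word_nonb[OF nb] d(2) by simp
  show "(d, 0) \<in> darts \<alpha>S" "lab \<alpha>S (d, 0) = b" "init \<alpha>S (d, 0) = Inl (init S d)"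
    using d n wh_word_nonb[OF nb] by (simp_all add: darts_subdiv lab_subdiv init_subdiv)
  have "term_v \<alpha>S (d, 0) = init \<alpha>S (dinv S d, ?n - 1)" by (simp add: term_v_subdiv)
  also have "\<dots> = init \<alpha>S (d, 1)"
    using init_subdiv_dinv[where w = "wh_word b A", OF labeled_S length_wh_word_sinv d(1), of 1] n by simp
  finally show "term_v \<alpha>S (d, 0) = init \<alpha>S (d, 1)" .
qed

lemma mid_dart_subdiv:
  assumes d: "d \<in> nonb_darts S b"
  defines "i \<equiv> sub_idx b A (lab S d)"
  shows "(d, i) \<in> darts \<alpha>S" "lab \<alpha>S (d, i) = lab S d"
    "dinv \<alpha>S (d, i) = (dinv S d, sub_idx b A (lab S (dinv S d)))"
    "init \<alpha>S (d, i) = (if lab S d \<in> A then term_v \<alpha>S (d, 0) else Inl (init S d))"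
proof -
  let ?c = "lab S d"
  have dS: "d \<in> darts S" and nb: "?c \<noteq> b" "?c \<noteq> sinv b"
    using d unfolding nonb_darts_def by auto
  have nb': "sinv ?c \<noteq> b" "sinv ?c \<noteq> sinv b" using nb by (auto simp: sinv_eq_iff)
  have i: "i = (if ?c \<in> A then 1 else 0)" using sub_idx_nonb[OF nb] unfolding i_def .
  have n: "length (wh_word b A ?c) = (if ?c \<in> A then 1 else 0) + 1 + (if sinv ?c \<in> A then 1 else 0)"
    using length_wh_word_nonb[OF nb] .
  show "(d, i) \<in> darts \<alpha>S" using dS n i by (simp add: darts_subdiv)
  show "lab \<alpha>S (d, i) = ?c"
    using wh_word_nth_eq_self_iff[OF nb, where A=A and i=i] i by (simp add: lab_subdiv)
  show "dinv \<alpha>S (d, i) = (dinv S d, sub_idx b A (lab S (dinv S d)))"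
    using n i sub_idx_nonb[OF nb'] lab_dinv[OF labeled_S dS] by (simp add: dinv_subdiv)
  show "init \<alpha>S (d, i) = (if ?c \<in> A then term_v \<alpha>S (d, 0) else Inl (init S d))"
    using i prefix_dart_subdiv(4)[OF dS] by (simp add: init_subdiv)
qed

lemma b_dart_subdiv_cases:
  assumes x: "x \<in> darts \<alpha>S" "lab \<alpha>S x = b"
  obtains d where "d \<in> darts S" "lab S d = b" "x = (d, 0)"
    | d where "d \<in> darts S" "lab S d \<in> A" "x = (d, 0)"
proof -
  obtain d i where di: "x = (d, i)" "d \<in> darts S" "i < length (wh_word b A (lab S d))"
    using x(1) by (auto simp: darts_subdiv)
  have w: "wh_word b A (lab S d) ! i = b" using x(2) di(1) by (simp add: lab_subdiv)
  consider "lab S d = b" | "lab S d = sinv b" | "lab S d \<noteq> b" "lab S d \<noteq> sinv b" by blast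
  then show ?thesis
  proof cases
    case 1
    then show ?thesis using that(1) di w by simp
  next
    case 2
    then show ?thesis using di w by simp
  next
    case 3
    then show ?thesis using that(2) di wh_word_nth_eq_b[OF 3 di(3) w] by simp
  qed
qed

lemma nonb_dart_subdiv_cases:
  assumes x: "x \<in> darts \<alpha>S" "lab \<alpha>S x \<notin> {b, sinv b}"
  shows "fst x \<in> nonb_darts S b" "x = (fst x, sub_idx b A (lab S (fst x)))"
    "lab \<alpha>S x = lab S (fst x)"
proof -
  obtain d i where di: "x = (d, i)" "d \<in> darts S" "i < length (wh_word b A (lab S d))"
    using x(1) by (auto simp: darts_subdiv)
  have w: "wh_word b A (lab S d) ! i \<notin> {b, sinv b}" using x(2) di(1) by (simp add: lab_subdiv)
  then have nb: "lab S d \<noteq> b" "lab S d \<noteq> sinv b" using di(3) by auto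
  show "fst x \<in> nonb_darts S b" using di nb unfolding nonb_darts_def by simp
  show "x = (fst x, sub_idx b A (lab S (fst x)))" using wh_word_nth_nonb(2)[OF nb di(3) w] di(1) by simp
  show "lab \<alpha>S x = lab S (fst x)" using wh_word_nth_nonb(1)[OF nb di(3) w] di(1) by (simp add: lab_subdiv)
qed

lemma verts_subdiv_cases:
  assumes a: "a \<in> verts \<alpha>S"
  obtains v where "v \<in> verts S" "a = Inl v"
    | d where "d \<in> darts S" "lab S d \<in> A" "a = init \<alpha>S (d, 1)"
proof -
  consider (old) "a \<in> Inl ` verts S"
    | (new) d k where "d \<in> darts S" "0 < k" "k < length (wh_word b A (lab S d))"
        "a = Inr {(d, k), (dinv S d, length (wh_word b A (lab S d)) - k)}"
    using a unfolding verts_subdiv by blast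
  then show ?thesis
  proof cases
    case old
    then show ?thesis using that(1) by blast
  next
    case new
    let ?c = "lab S d" let ?n = "length (wh_word b A (lab S d))"
    have a_init: "a = init \<alpha>S (d, k)" using new by (simp add: init_subdiv)
    have nb: "?c \<noteq> b" "?c \<noteq> sinv b" using new(2,3) by auto
    then have "(?c \<in> A \<and> k = 1) \<or> (sinv ?c \<in> A \<and> k = ?n - 1)"
      using new(2,3) length_wh_word_nonb[OF nb] by (auto split: if_splits)
    then show ?thesis
    proof
      assume "?c \<in> A \<and> k = 1"
      then show ?thesis using that(2) new(1) a_init by blast
    next
      assume k: "sinv ?c \<in> A \<and> k = ?n - 1"
      have "a = init \<alpha>S (dinv S d, 1)"
        using a_init k new(2,3) init_subdiv_dinv[where w = "wh_word b A", OF labeled_S length_wh_word_sinv new(1), of k] by simp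
      then show ?thesis
        using that(2) dinv_dart[OF labeled_S new(1)] lab_dinv[OF labeled_S new(1)] k by simp
    qed
  qed
qed

lemma bcomp_subdiv_Inl:
  assumes "(u, v) \<in> bcomp S b"
  shows "(Inl u, Inl v) \<in> bcomp \<alpha>S b"
proof -
  have "(bstep S b)\<^sup>*\<^sup>* u v" using assms unfolding bcomp_def by simp
  then have "(bstep \<alpha>S b)\<^sup>*\<^sup>* (Inl u) (Inl v)"
  proof (induction rule: rtranclp_induct)
    case base
    then show ?case by simp
  next
    case (step v1 v2)
    then obtain d where "d \<in> darts S" "lab S d \<in> {b, sinv b}" "init S d = v1" "term_v S d = v2"
      unfolding bstep_def by blast
    then have "bstep \<alpha>S b (Inl v1) (Inl v2)"
      unfolding bstep_def using b_dart_subdiv by (intro bexI[of _ "(d, 0)"]) auto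
    then show ?case using step.IH by simp
  qed
  then show ?thesis using assms unfolding bcomp_def by (simp add: verts_subdiv)
qed

lemma bcomp_subdiv_prefix:
  assumes "d \<in> darts S" "lab S d \<in> A"
  shows "(Inl (init S d), term_v \<alpha>S (d, 0)) \<in> bcomp \<alpha>S b"
proof (rule bcomp_bstep)
  note prefix = prefix_dart_subdiv[OF assms]
  show "bstep \<alpha>S b (Inl (init S d)) (term_v \<alpha>S (d, 0))"
    unfolding bstep_def using prefix by (intro bexI[of _ "(d, 0)"]) auto
  show "Inl (init S d) \<in> verts \<alpha>S" "term_v \<alpha>S (d, 0) \<in> verts \<alpha>S"
    using init_vert[OF labeled_\<alpha>S prefix(1)] term_vert[OF labeled_\<alpha>S prefix(1)] prefix(3) by simp_all
qed

end

locale tight_whitehead_subdivision = whitehead_subdivision B b A S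
  for B :: "'b set" and b :: "'b \<times> bool" and A :: "('b \<times> bool) set"
    and S :: "('v, 'd, 'b) lgraph" +
  assumes tight_S: "tight S"
begin

lemma tight_S_eq:
  "d1 \<in> darts S \<Longrightarrow> d2 \<in> darts S \<Longrightarrow> init S d1 = init S d2 \<Longrightarrow> lab S d1 = lab S d2 \<Longrightarrow> d1 = d2"
  using tight_S unfolding tight_def by blast

lemma b_dart_term_eq:
  assumes "d1 \<in> darts S" "d2 \<in> darts S" "lab S d1 = b" "lab S d2 = b" "term_v S d1 = term_v S d2"
  shows "d1 = d2"
proof -
  have "dinv S d1 = dinv S d2"
    using assms labeled_graphD[OF labeled_S assms(1)] labeled_graphD[OF labeled_S assms(2)]
    by (intro tight_S_eq) auto
  then show ?thesis using dinv_dinv[OF labeled_S] assms(1,2) by metis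
qed

text \<open>Inr u stands for a new vertex, the end of a new dart labeled b at u; it is used when
  S has no dart labeled b at u.\<close>

definition b_succ :: "'v \<Rightarrow> 'v + 'v" where
  "b_succ u = (if \<exists>d\<in>darts S. init S d = u \<and> lab S d = b
     then Inl (term_v S (THE d. d \<in> darts S \<and> init S d = u \<and> lab S d = b)) else Inr u)"

lemma b_succ_dart:
  assumes "d \<in> darts S" "lab S d = b"
  shows "b_succ (init S d) = Inl (term_v S d)"
proof -
  have "(THE d'. d' \<in> darts S \<and> init S d' = init S d \<and> lab S d' = b) = d"
    using assms tight_S_eq by (intro the_equality) auto
  then show ?thesis unfolding b_succ_def using assms by auto
qed

lemma b_succ_no_dart: "\<not> (\<exists>d\<in>darts S. init S d = u \<and> lab S d = b) \<Longrightarrow> b_succ u = Inr u"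
  unfolding b_succ_def by simp

lemma b_succ_cases:
  "b_succ u = Inr u \<or> (\<exists>d\<in>darts S. init S d = u \<and> lab S d = b \<and> b_succ u = Inl (term_v S d))"
proof (cases "\<exists>d\<in>darts S. init S d = u \<and> lab S d = b")
  case True
  then obtain d where d: "d \<in> darts S" "init S d = u" "lab S d = b" by blast
  then show ?thesis using b_succ_dart[OF d(1,3)] by blast
next
  case False
  then show ?thesis using b_succ_no_dart by simp
qed

lemma inj_b_succ: "inj b_succ"
proof (rule injI)
  fix u u' assume eq: "b_succ u = b_succ u'"
  show "u = u'"
  proof (cases "b_succ u = Inr u")
    case True
    then show ?thesis using eq b_succ_cases[of u'] by auto
  next
    case False
    then obtain d where d: "d \<in> darts S" "init S d = u" "lab S d = b" "b_succ u = Inl (term_v S d)"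
      using b_succ_cases[of u] by blast
    then obtain d' where d': "d' \<in> darts S" "init S d' = u'" "lab S d' = b" "b_succ u' = Inl (term_v S d')"
      using eq b_succ_cases[of u'] by auto
    have "term_v S d = term_v S d'" using d(4) d'(4) eq by simp
    then show ?thesis using b_dart_term_eq[OF d(1) d'(1) d(3) d'(3)] d(2) d'(2) by simp
  qed
qed

lemma b_succ_bcomp:
  assumes "u \<in> verts S"
  shows "(u, case_sum id id (b_succ u)) \<in> bcomp S b"
proof (cases "\<exists>d\<in>darts S. init S d = u \<and> lab S d = b")
  case True
  then obtain d where d: "d \<in> darts S" "init S d = u" "lab S d = b" by blast
  have "bstep S b u (term_v S d)" unfolding bstep_def using d by auto
  then have "(u, term_v S d) \<in> bcomp S b"
    by (rule bcomp_bstep[OF _ assms term_vert[OF labeled_S d(1)]])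
  then show ?thesis using b_succ_dart[OF d(1,3)] d(2) by simp
next
  case False
  have "u \<in> bcomp S b `` {u}" by (rule equiv_class_self[OF equiv_bcomp[OF labeled_S] assms])
  then show ?thesis using b_succ_no_dart[OF False] by simp
qed

text \<open>The vertex at which a vertex of \<alpha>S ends up after folding: the subdivision vertex
  after the prefix b of the path of d goes to the b-successor of init d.\<close>

definition \<rho> :: "'v + ('d \<times> nat) set \<Rightarrow> 'v + 'v" where
  "\<rho> a = (case a of Inl v \<Rightarrow> Inl v
     | Inr _ \<Rightarrow> b_succ (init S (SOME d. d \<in> darts S \<and> lab S d \<in> A \<and> init \<alpha>S (d, 1) = a)))"

lemma \<rho>_Inl [simp]: "\<rho> (Inl v) = Inl v"
  by (simp add: \<rho>_def)

lemma prefix_end_eq: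
  assumes d: "d \<in> darts S" "lab S d \<in> A" and d': "d' \<in> darts S" "lab S d' \<in> A"
    and eq: "init \<alpha>S (d', 1) = init \<alpha>S (d, 1)"
  shows "d' = d"
proof (rule ccontr)
  assume "d' \<noteq> d"
  let ?n = "length (wh_word b A (lab S d))"
  have "{(d', 1), (dinv S d', length (wh_word b A (lab S d')) - 1)} = {(d, 1), (dinv S d, ?n - 1)}"
    using eq by (simp add: init_subdiv)
  then have "(d', 1) \<in> {(d, 1), (dinv S d, ?n - 1)}" by (metis insertI1)
  then have "d' = dinv S d" "?n = 2" using \<open>d' \<noteq> d\<close> by auto
  moreover have "lab S d \<noteq> b" "lab S d \<noteq> sinv b" using A_nonb d(2) by auto
  ultimately show False
    using length_wh_word_nonb[of "lab S d" b A] d(2) d'(2) lab_dinv[OF labeled_S d(1)] by simp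
qed

lemma \<rho>_prefix_end:
  assumes d: "d \<in> darts S" "lab S d \<in> A"
  shows "\<rho> (init \<alpha>S (d, 1)) = b_succ (init S d)"
proof -
  let ?P = "\<lambda>d'. d' \<in> darts S \<and> lab S d' \<in> A \<and> init \<alpha>S (d', 1) = init \<alpha>S (d, 1)"
  have "(SOME d'. ?P d') = d"
    using d prefix_end_eq[OF d] by (intro some_equality) auto
  then show ?thesis unfolding \<rho>_def by (simp add: init_subdiv)
qed

lemma \<rho>_b_dart:
  assumes x: "x \<in> darts \<alpha>S" "lab \<alpha>S x = b"
  obtains u where "u \<in> verts S" "\<rho> (init \<alpha>S x) = Inl u" "\<rho> (term_v \<alpha>S x) = b_succ u"
  using x
proof (cases rule: b_dart_subdiv_cases)
  case (1 d)
  then show ?thesis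
    using b_dart_subdiv[of d] b_succ_dart[of d] init_vert[OF labeled_S]
    by (intro that[of "init S d"]) simp_all
next
  case (2 d)
  then show ?thesis
    using prefix_dart_subdiv[of d] \<rho>_prefix_end[of d] init_vert[OF labeled_S]
    by (intro that[of "init S d"]) simp_all
qed

lemma \<rho>_sinv_b_dart:
  assumes x: "x \<in> darts \<alpha>S" "lab \<alpha>S x = sinv b"
  obtains u where "u \<in> verts S" "\<rho> (init \<alpha>S x) = b_succ u" "\<rho> (term_v \<alpha>S x) = Inl u"
proof -
  have "lab \<alpha>S (dinv \<alpha>S x) = b" using x(2) lab_dinv[OF labeled_\<alpha>S x(1)] by simp
  then show ?thesis
    using \<rho>_b_dart[OF dinv_dart[OF labeled_\<alpha>S x(1)]] that
      init_dinv[OF labeled_\<alpha>S x(1)] term_dinv[OF labeled_\<alpha>S x(1)] by metis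
qed

lemma \<rho>_nonb_dart:
  assumes x: "x \<in> darts \<alpha>S" "lab \<alpha>S x \<notin> {b, sinv b}"
  shows "\<rho> (init \<alpha>S x) =
    (if lab S (fst x) \<in> A then b_succ (init S (fst x)) else Inl (init S (fst x)))"
proof -
  note nb = nonb_dart_subdiv_cases[OF x]
  have "fst x \<in> darts S" using nb(1) unfolding nonb_darts_def by simp
  then show ?thesis
    using mid_dart_subdiv(4)[OF nb(1)] nb(2) prefix_dart_subdiv(4) \<rho>_prefix_end by (metis \<rho>_Inl)
qed

lemma nonb_dart_subdiv_eq:
  assumes x: "x \<in> darts \<alpha>S" and y: "y \<in> darts \<alpha>S" and lab: "lab \<alpha>S x = lab \<alpha>S y"
    and nb: "lab \<alpha>S x \<notin> {b, sinv b}" and \<rho>: "\<rho> (init \<alpha>S x) = \<rho> (init \<alpha>S y)"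
  shows "x = y"
proof -
  have nb': "lab \<alpha>S y \<notin> {b, sinv b}" using lab nb by simp
  note cx = nonb_dart_subdiv_cases[OF x nb] and cy = nonb_dart_subdiv_cases[OF y nb']
  have lab_S: "lab S (fst x) = lab S (fst y)" using cx(3) cy(3) lab by simp
  have "init S (fst x) = init S (fst y)"
    using \<rho> \<rho>_nonb_dart[OF x nb] \<rho>_nonb_dart[OF y nb'] lab_S inj_b_succ
    by (auto simp: inj_eq split: if_splits)
  then have "fst x = fst y"
    using tight_S_eq lab_S cx(1) cy(1) unfolding nonb_darts_def by blast
  then show ?thesis using cx(2) cy(2) lab_S by metis
qed

lemma label_deterministic_\<rho>: "label_deterministic \<alpha>S \<rho>"
  unfolding label_deterministic_def
proof (intro ballI impI)
  fix x y assume x: "x \<in> darts \<alpha>S" and y: "y \<in> darts \<alpha>S"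
    and xy: "lab \<alpha>S x = lab \<alpha>S y \<and> \<rho> (init \<alpha>S x) = \<rho> (init \<alpha>S y)"
  consider (b) "lab \<alpha>S x = b" | (sinv_b) "lab \<alpha>S x = sinv b" | (nonb) "lab \<alpha>S x \<notin> {b, sinv b}"
    by blast
  then show "\<rho> (term_v \<alpha>S x) = \<rho> (term_v \<alpha>S y)"
  proof cases
    case b
    have "lab \<alpha>S y = b" using b xy by simp
    obtain u v where "\<rho> (init \<alpha>S x) = Inl u" "\<rho> (term_v \<alpha>S x) = b_succ u"
      "\<rho> (init \<alpha>S y) = Inl v" "\<rho> (term_v \<alpha>S y) = b_succ v"
      using \<rho>_b_dart[OF x b] \<rho>_b_dart[OF y \<open>lab \<alpha>S y = b\<close>] by metis
    then show ?thesis using xy by simp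
  next
    case sinv_b
    have "lab \<alpha>S y = sinv b" using sinv_b xy by simp
    obtain u v where "\<rho> (init \<alpha>S x) = b_succ u" "\<rho> (term_v \<alpha>S x) = Inl u"
      "\<rho> (init \<alpha>S y) = b_succ v" "\<rho> (term_v \<alpha>S y) = Inl v"
      using \<rho>_sinv_b_dart[OF x sinv_b] \<rho>_sinv_b_dart[OF y \<open>lab \<alpha>S y = sinv b\<close>] by metis
    then show ?thesis using xy inj_b_succ by (simp add: inj_eq)
  next
    case nonb
    then show ?thesis using nonb_dart_subdiv_eq[OF x y] xy by simp
  qed
qed

text \<open>A new vertex Inr u counts as lying in the b-component of u, to which it is joined by
  its dart labeled b.\<close>

definition b_class :: "'v + ('d \<times> nat) set \<Rightarrow> 'v set" where
  "b_class a = bcomp S b `` {case_sum id id (\<rho> a)}"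

lemma b_class_b_dart:
  assumes x: "x \<in> darts \<alpha>S" "lab \<alpha>S x \<in> {b, sinv b}"
  shows "b_class (init \<alpha>S x) = b_class (term_v \<alpha>S x)"
proof -
  have succ: "bcomp S b `` {u} = bcomp S b `` {case_sum id id (b_succ u)}" if "u \<in> verts S" for u
    using equiv_class_eq[OF equiv_bcomp[OF labeled_S] b_succ_bcomp[OF that]] .
  consider (b) "lab \<alpha>S x = b" | (sinv_b) "lab \<alpha>S x = sinv b" using x(2) by blast
  then show ?thesis
  proof cases
    case b
    obtain u where "u \<in> verts S" "\<rho> (init \<alpha>S x) = Inl u" "\<rho> (term_v \<alpha>S x) = b_succ u"
      using \<rho>_b_dart[OF x(1) b] .
    then show ?thesis unfolding b_class_def using succ by simp
  next
    case sinv_b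
    obtain u where "u \<in> verts S" "\<rho> (init \<alpha>S x) = b_succ u" "\<rho> (term_v \<alpha>S x) = Inl u"
      using \<rho>_sinv_b_dart[OF x(1) sinv_b] .
    then show ?thesis unfolding b_class_def using succ by simp
  qed
qed

end

locale whitehead_folding = tight_whitehead_subdivision B b A S
  for B :: "'b set" and b :: "'b \<times> bool" and A :: "('b \<times> bool) set"
    and S :: "('v, 'd, 'b) lgraph" +
  fixes T :: "('v + ('d \<times> nat) set, 'd \<times> nat, 'b) lgraph"
    and f :: "'v + ('d \<times> nat) set \<Rightarrow> 'v + ('d \<times> nat) set" and g :: "'d \<times> nat \<Rightarrow> 'd \<times> nat"
  assumes folds: "folds_to (subdiv (wh_word b A) S) T f g"
begin

lemma quotient_T: "graph_quotient \<alpha>S T f g"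
  using folds_to_graph_quotient[OF folds] .

lemma labeled_T: "labeled_graph B T"
  using graph_quotient_labeled_graph[OF quotient_T labeled_\<alpha>S] .

lemma \<rho>_fold: "u \<in> verts \<alpha>S \<Longrightarrow> v \<in> verts \<alpha>S \<Longrightarrow> f u = f v \<Longrightarrow> \<rho> u = \<rho> v"
  using folds_to_respects_deterministic[OF folds labeled_\<alpha>S label_deterministic_\<rho>] .

lemma f_Inl_in_verts_T: "v \<in> verts S \<Longrightarrow> f (Inl v) \<in> verts T"
  using quotient_T unfolding graph_quotient_def by (simp add: verts_subdiv)

lemma nonb_dart_T:
  assumes d: "d \<in> nonb_darts S b"
  defines "d' \<equiv> g (d, sub_idx b A (lab S d))"
  shows "d' \<in> darts T" "lab T d' = lab S d"
    "dinv T d' = g (dinv S d, sub_idx b A (lab S (dinv S d)))"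
    "(f (Inl (init S d)), init T d') \<in> bcomp T b"
proof -
  note mid = mid_dart_subdiv[OF d] and x = graph_quotientD[OF quotient_T mid_dart_subdiv(1)[OF d]]
  show "d' \<in> darts T" "lab T d' = lab S d" "dinv T d' = g (dinv S d, sub_idx b A (lab S (dinv S d)))"
    using x mid unfolding d'_def by simp_all
  have dS: "d \<in> darts S" using d unfolding nonb_darts_def by simp
  show "(f (Inl (init S d)), init T d') \<in> bcomp T b"
  proof (cases "lab S d \<in> A")
    case True
    then show ?thesis
      using graph_quotient_bcomp[OF quotient_T labeled_\<alpha>S bcomp_subdiv_prefix[OF dS True]] x(3) mid(4)
      unfolding d'_def by simp
  next
    case False
    have "f (Inl (init S d)) \<in> verts T" using f_Inl_in_verts_T init_vert[OF labeled_S dS] .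
    then show ?thesis
      using False x(3) mid(4) equiv_class_self[OF equiv_bcomp[OF labeled_T]] unfolding d'_def by simp
  qed
qed

lemma bij_betw_nonb_darts:
  "bij_betw (\<lambda>d. g (d, sub_idx b A (lab S d))) (nonb_darts S b) (nonb_darts T b)"
  unfolding bij_betw_def
proof (intro conjI inj_onI subset_antisym image_subsetI subsetI)
  fix d1 d2 assume d: "d1 \<in> nonb_darts S b" "d2 \<in> nonb_darts S b"
    and eq: "g (d1, sub_idx b A (lab S d1)) = g (d2, sub_idx b A (lab S d2))"
  let ?x1 = "(d1, sub_idx b A (lab S d1))" and ?x2 = "(d2, sub_idx b A (lab S d2))"
  note x1 = mid_dart_subdiv(1,2)[OF d(1)] and x2 = mid_dart_subdiv(1,2)[OF d(2)]
  have "f (init \<alpha>S ?x1) = f (init \<alpha>S ?x2)"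
    using graph_quotientD(3)[OF quotient_T x1(1)] graph_quotientD(3)[OF quotient_T x2(1)] eq by simp
  then have \<rho>: "\<rho> (init \<alpha>S ?x1) = \<rho> (init \<alpha>S ?x2)"
    using \<rho>_fold init_vert[OF labeled_\<alpha>S x1(1)] init_vert[OF labeled_\<alpha>S x2(1)] by blast
  have lab: "lab \<alpha>S ?x1 = lab \<alpha>S ?x2"
    using graph_quotientD(4)[OF quotient_T x1(1)] graph_quotientD(4)[OF quotient_T x2(1)] eq by simp
  have "lab \<alpha>S ?x1 \<notin> {b, sinv b}" using x1(2) d(1) unfolding nonb_darts_def by simp
  then show "d1 = d2" using nonb_dart_subdiv_eq[OF x1(1) x2(1) lab _ \<rho>] by simp
next
  fix d assume "d \<in> nonb_darts S b"
  then show "g (d, sub_idx b A (lab S d)) \<in> nonb_darts T b"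
    using nonb_dart_T(1,2)[of d] unfolding nonb_darts_def by simp
next
  fix y assume y: "y \<in> nonb_darts T b"
  then obtain x where x: "x \<in> darts \<alpha>S" "y = g x"
    using quotient_T unfolding graph_quotient_def nonb_darts_def by auto
  then have "lab \<alpha>S x \<notin> {b, sinv b}"
    using y graph_quotientD(4)[OF quotient_T x(1)] unfolding nonb_darts_def by simp
  note cases = nonb_dart_subdiv_cases[OF x(1) this]
  have "y = g (fst x, sub_idx b A (lab S (fst x)))" using cases(2) x(2) by simp
  then show "y \<in> (\<lambda>d. g (d, sub_idx b A (lab S d))) ` nonb_darts S b"
    using cases(1) by (rule image_eqI)
qed

lemma bcomp_T_Inl_iff:
  assumes "u \<in> verts S" "v \<in> verts S"
  shows "(f (Inl u), f (Inl v)) \<in> bcomp T b \<longleftrightarrow> (u, v) \<in> bcomp S b"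
proof
  assume "(f (Inl u), f (Inl v)) \<in> bcomp T b"
  moreover have "Inl u \<in> verts \<alpha>S" "Inl v \<in> verts \<alpha>S" using assms by (simp_all add: verts_subdiv)
  moreover have "b_class a = b_class a'" if "a \<in> verts \<alpha>S" "a' \<in> verts \<alpha>S" "f a = f a'" for a a'
    unfolding b_class_def using \<rho>_fold[OF that] by simp
  ultimately have "b_class (Inl u) = b_class (Inl v)"
    using graph_quotient_bcomp_invariant[OF quotient_T labeled_\<alpha>S b_class_b_dart] by blast
  then show "(u, v) \<in> bcomp S b"
    using assms by (simp add: b_class_def eq_equiv_class_iff[OF equiv_bcomp[OF labeled_S]])
next
  assume "(u, v) \<in> bcomp S b"
  then show "(f (Inl u), f (Inl v)) \<in> bcomp T b"
    using graph_quotient_bcomp[OF quotient_T labeled_\<alpha>S bcomp_subdiv_Inl] by blast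
qed

lemma bcomp_T_Inl_exists:
  assumes "q \<in> verts T"
  shows "\<exists>v\<in>verts S. (f (Inl v), q) \<in> bcomp T b"
proof -
  obtain a where a: "a \<in> verts \<alpha>S" "q = f a" using assms quotient_T unfolding graph_quotient_def by auto
  then show ?thesis
  proof (cases rule: verts_subdiv_cases)
    case (1 v)
    have "(q, q) \<in> bcomp T b" using equiv_class_self[OF equiv_bcomp[OF labeled_T] assms] by simp
    then show ?thesis using 1 a(2) by blast
  next
    case (2 d)
    then have "(f (Inl (init S d)), q) \<in> bcomp T b"
      using graph_quotient_bcomp[OF quotient_T labeled_\<alpha>S bcomp_subdiv_prefix[OF 2(1,2)]]
        prefix_dart_subdiv(4)[OF 2(1,2)] a(2) by simp
    then show ?thesis using init_vert[OF labeled_S 2(1)] by blast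
  qed
qed

theorem b_components_iso:
  "\<exists>\<Phi>. bij_betw \<Phi> (verts S // bcomp S b) (verts T // bcomp T b)
     \<and> (\<forall>v\<in>verts S. \<Phi> (bcomp S b `` {v}) = bcomp T b `` {f (Inl v)})
     \<and> (\<forall>d\<in>nonb_darts S b.
          let d' = g (d, sub_idx b A (lab S d)) in
            lab T d' = lab S d
          \<and> dinv T d' = g (dinv S d, sub_idx b A (lab S (dinv S d)))
          \<and> \<Phi> (bcomp S b `` {init S d}) = bcomp T b `` {init T d'})"
proof -
  let ?\<Phi> = "\<lambda>C. \<Union>v\<in>C. bcomp T b `` {f (Inl v)}"
  note eqS = equiv_bcomp[OF labeled_S] and eqT = equiv_bcomp[OF labeled_T]
  have "(\<lambda>v. f (Inl v)) ` verts S \<subseteq> verts T" using f_Inl_in_verts_T by blast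
  note bij = bij_betw_quotient_classes[OF eqS eqT this bcomp_T_Inl_iff bcomp_T_Inl_exists]
  have classes: "?\<Phi> (bcomp S b `` {v}) = bcomp T b `` {f (Inl v)}" if "v \<in> verts S" for v
    using quotient_classes_image[OF eqS eqT bcomp_T_Inl_iff that] .
  have "?\<Phi> (bcomp S b `` {init S d}) = bcomp T b `` {init T (g (d, sub_idx b A (lab S d)))}"
    if "d \<in> nonb_darts S b" for d
    using classes init_vert[OF labeled_S] that nonb_dart_T(4)[OF that] equiv_class_eq[OF eqT]
    unfolding nonb_darts_def by simp
  then show ?thesis using bij classes nonb_dart_T(2,3) by (intro exI[of _ ?\<Phi>]) (simp add: Let_def)
qed

end

lemma bij_betw_Sigma_fibres:
  assumes "\<And>j. j \<in> I \<Longrightarrow> bij_betw (h j) (X j) (Y j)"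
  shows "bij_betw (\<lambda>(j, x). (j, h j x)) (Sigma I X) (Sigma I Y)"
  unfolding bij_betw_def
proof (intro conjI inj_onI subset_antisym subsetI)
  fix p q assume "p \<in> Sigma I X" "q \<in> Sigma I X" "(\<lambda>(j, x). (j, h j x)) p = (\<lambda>(j, x). (j, h j x)) q"
  then show "p = q" using assms by (auto simp: bij_betw_def inj_on_def)
next
  fix p assume "p \<in> (\<lambda>(j, x). (j, h j x)) ` Sigma I X"
  then show "p \<in> Sigma I Y" using assms by (auto simp: bij_betw_def)
next
  fix p assume p: "p \<in> Sigma I Y"
  then obtain j y where "p = (j, y)" "j \<in> I" "y \<in> h j ` X j" using assms by (auto simp: bij_betw_def)
  then show "p \<in> (\<lambda>(j, x). (j, h j x)) ` Sigma I X" by force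
qed

theorem lemma9p7:
  fixes B :: "'b set" and b :: "'b \<times> bool" and A :: "('b \<times> bool) set"
    and Ss :: "('v, 'd, 'b) lgraph list"
    and Ts :: "('v + ('d \<times> nat) set, 'd \<times> nat, 'b) lgraph list"
    and fv :: "nat \<Rightarrow> 'v + ('d \<times> nat) set \<Rightarrow> 'v + ('d \<times> nat) set"
    and fd :: "nat \<Rightarrow> 'd \<times> nat \<Rightarrow> 'd \<times> nat"
  assumes "finite B"
    and "\<forall>j<length Ss. labeled_graph B (Ss ! j) \<and> finite_graph (Ss ! j)
                        \<and> connected_graph (Ss ! j) \<and> tight (Ss ! j)"
    and "elementary_whitehead B b A"
    and "length Ts = length Ss"
    and "\<forall>j<length Ss. is_tightening (subdiv (wh_word b A) (Ss ! j)) (Ts ! j) (fv j) (fd j)"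
  shows "(\<forall>j<length Ss. \<forall>d\<in>nonb_darts (Ss ! j) b.
            \<exists>!i. i < length (wh_word b A (lab (Ss ! j) d)) \<and> wh_word b A (lab (Ss ! j) d) ! i = lab (Ss ! j) d)
       \<and> bij_betw (\<lambda>(j, d). (j, fd j (d, sub_idx b A (lab (Ss ! j) d))))
           {(j, d). j < length Ss \<and> d \<in> nonb_darts (Ss ! j) b}
           {(j, d'). j < length Ss \<and> d' \<in> nonb_darts (Ts ! j) b}
       \<and> (\<forall>j<length Ss. \<exists>\<Phi>.
            bij_betw \<Phi> (verts (Ss ! j) // bcomp (Ss ! j) b) (verts (Ts ! j) // bcomp (Ts ! j) b)
          \<and> (\<forall>v\<in>verts (Ss ! j). \<Phi> (bcomp (Ss ! j) b `` {v}) = bcomp (Ts ! j) b `` {fv j (Inl v)})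
          \<and> (\<forall>d\<in>nonb_darts (Ss ! j) b.
               let d' = fd j (d, sub_idx b A (lab (Ss ! j) d)) in
                 lab (Ts ! j) d' = lab (Ss ! j) d
               \<and> dinv (Ts ! j) d' = fd j (dinv (Ss ! j) d, sub_idx b A (lab (Ss ! j) (dinv (Ss ! j) d)))
               \<and> \<Phi> (bcomp (Ss ! j) b `` {init (Ss ! j) d}) = bcomp (Ts ! j) b `` {init (Ts ! j) d'}))"
proof -
  have folding: "whitehead_folding B b A (Ss ! j) (Ts ! j) (fv j) (fd j)" if "j < length Ss" for j
  proof (intro whitehead_folding.intro tight_whitehead_subdivision.intro whitehead_subdivision.intro
      tight_whitehead_subdivision_axioms.intro whitehead_folding_axioms.intro)
    show "labeled_graph B (Ss ! j)" "tight (Ss ! j)" using assms(2) that by simp_all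
    show "folds_to (subdiv (wh_word b A) (Ss ! j)) (Ts ! j) (fv j) (fd j)"
      using assms(5) that unfolding is_tightening_def by simp
  qed (rule assms(3))
  have "bij_betw (\<lambda>(j, d). (j, fd j (d, sub_idx b A (lab (Ss ! j) d))))
      (Sigma {..<length Ss} (\<lambda>j. nonb_darts (Ss ! j) b)) (Sigma {..<length Ss} (\<lambda>j. nonb_darts (Ts ! j) b))"
    by (rule bij_betw_Sigma_fibres) (simp add: whitehead_folding.bij_betw_nonb_darts[OF folding])
  moreover have "{(j, d). j < length Ss \<and> d \<in> nonb_darts (Ss ! j) b} = Sigma {..<length Ss} (\<lambda>j. nonb_darts (Ss ! j) b)"
    "{(j, d'). j < length Ss \<and> d' \<in> nonb_darts (Ts ! j) b} = Sigma {..<length Ss} (\<lambda>j. nonb_darts (Ts ! j) b)"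
    by auto
  ultimately show ?thesis
    using nonb_dart_unique_self_index whitehead_folding.b_components_iso[OF folding]
    by (intro conjI allI impI ballI) simp_all
qed

end
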